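(* Let $s>0$ and $\mu_1>r$. Suppose that under $\mathbb{Q}$, $\ln S_T\sim N\big(\ln S_0+(r-\tfrac{s^2}{2})T,\,s^2T\big)$, and let $\mathcal{P}=\{\mathbb{P}^\mu:\mu\ge\mu_1\}$ where under $\mathbb{P}^\mu$, $\ln S_T\sim N\big(\ln S_0+(\mu-\tfrac{s^2}{2})T,\,s^2T\big)$. Then $\mathbb{P}^{\mu_1}$ is a least favorable measure with respect to $\mathbb{F}_{FSD}$, its likelihood ratio $\ell^{\mathbb{P}^{\mu_1}}$ is a strictly increasing function of $S_T$, is continuously distributed under $\mathbb{P}^{\mu_1}$, and $1/\ell^{\mathbb{P}^{\mu_1}}$ has finite variance under $\mathbb{P}^{\mu_1}$. Consequently, for every cdf $F_0$ with $\int_0^1(F_0^{-1}(u))^2du<\infty$ and $F_0(x)=0$ for $x<0$, the $\mathbb{F}_{FSD}$-robust cost-efficiency problem for $F_0$ has the $\mathbb{P}^{\mu_1}$-a.s. unique solution $$X^*=F_0^{-1}\big(F_{S_T}^{\mathbb{P}^{\mu_1}}(S_T)\big).$$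
   Context: Standing setting: fix $T>0$, $r\in\mathbb{R}$, $S_0>0$, and write $\mathbb{R}_+=[0,\infty)$. $S_T:\Omega\to\mathbb{R}_+$ is a random variable, $\mathcal{F}=\sigma(S_T)$ (so a probability measure on $(\Omega,\mathcal{F})$ is determined by the law of $S_T$). The set of payoffs is $\mathcal{X}=\{g(S_T): g:\mathbb{R}_+\to\mathbb{R}_+\text{ measurable}, E_{\mathbb{Q}}[|g(S_T)|]<\infty\}$, and the price of $X\in\mathcal{X}$ is $e^{-rT}E_{\mathbb{Q}}[X]$. For $\mathbb{P}\in\mathcal{P}$, $\ell^{\mathbb{P}}=d\mathbb{P}/d\mathbb{Q}$; $F_X^{\mathbb{P}}$ is the cdf of $X$ under $\mathbb{P}$; for a cdf $F$, $F^{-1}(p)=\inf\{x:F(x)\ge p\}$. For a set $\mathbb{F}$ of measurable functions $\mathbb{R}_+\to\mathbb{R}$ and cdfs $F,G$ on $\mathbb{R}_+$, $F\preceq_{\mathbb{F}}G$ means $\int f\,dF\le\int f\,dG$ for all $f\in\mathbb{F}$ with finite integrals. $\mathbb{F}_{FSD}$ is the set of all non-decreasing functions $\mathbb{R}_+\to\mathbb{R}$. A measure $\mathbb{P}^*\in\mathcal{P}$ with $\ell^*=d\mathbb{P}^*/d\mathbb{Q}$ is least favorable w.r.t. $\mathbb{F}$ if $F_{\ell^*}^{\mathbb{P}^*}\preceq_{\mathbb{F}}F_{\ell^*}^{\mathbb{P}}$ for all $\mathbb{P}\in\mathcal{P}$. The $\mathbb{F}$-robust cost-efficiency problem for a cdf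 $F_0$ is $\inf\{e^{-rT}E_{\mathbb{Q}}[X]: X\in\mathcal{X},\ F_0\preceq_{\mathbb{F}}F_X^{\mathbb{P}}\ \forall\mathbb{P}\in\mathcal{P}\}$. *)

theory Defs
  imports "HOL-Probability.Probability"
begin

text \<open>Canonical model: since F = sigma(S_T), every measure is identified with the law of S_T,
  a probability measure on the real line (concentrated on (0,infinity)); S_T is the identity,
  and a payoff X = g(S_T) is identified with g.\<close>

definition ST_law :: "real \<Rightarrow> real \<Rightarrow> real \<Rightarrow> real \<Rightarrow> real measure" where
  "ST_law S0 s T \<mu> =
     distr (density lborel (normal_density (ln S0 + (\<mu> - s\<^sup>2 / 2) * T) (s * sqrt T))) borel exp"

definition lik :: "real measure \<Rightarrow> real measure \<Rightarrow> real \<Rightarrow> real" where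
  "lik Q P x = enn2real (RN_deriv Q P x)"

definition pref :: "(real \<Rightarrow> real) set \<Rightarrow> real measure \<Rightarrow> real measure \<Rightarrow> bool" where
  "pref \<F> M N \<longleftrightarrow> (\<forall>f\<in>\<F>. integrable M f \<longrightarrow> integrable N f \<longrightarrow> integral\<^sup>L M f \<le> integral\<^sup>L N f)"

definition FFSD :: "(real \<Rightarrow> real) set" where
  "FFSD = {f. mono f}"

definition least_favorable ::
  "(real \<Rightarrow> real) set \<Rightarrow> real measure \<Rightarrow> real measure set \<Rightarrow> real measure \<Rightarrow> bool" where
  "least_favorable \<F> Q \<P> Ps \<longleftrightarrow> Ps \<in> \<P> \<and>
     (\<forall>P\<in>\<P>. pref \<F> (distr Ps borel (lik Q Ps)) (distr P borel (lik Q Ps)))"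

text \<open>Payoffs g(S_T): g measurable, nonnegative on the range (0,infinity) of S_T, Q-integrable.\<close>
definition payoff :: "real measure \<Rightarrow> (real \<Rightarrow> real) \<Rightarrow> bool" where
  "payoff Q g \<longleftrightarrow> g \<in> borel_measurable borel \<and> (\<forall>x>0. 0 \<le> g x) \<and> integrable Q g"

definition price :: "real \<Rightarrow> real \<Rightarrow> real measure \<Rightarrow> (real \<Rightarrow> real) \<Rightarrow> real" where
  "price r T Q g = exp (- r * T) * integral\<^sup>L Q g"

text \<open>Feasible set of the F-robust cost-efficiency problem for the law M0 (cdf F0 = cdf M0).\<close>
definition robust_feasible ::
  "(real \<Rightarrow> real) set \<Rightarrow> real measure \<Rightarrow> real measure set \<Rightarrow> real measure \<Rightarrow> (real \<Rightarrow> real) \<Rightarrow> bool" where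
  "robust_feasible \<F> Q \<P> M0 g \<longleftrightarrow> payoff Q g \<and> (\<forall>P\<in>\<P>. pref \<F> M0 (distr P borel g))"

definition robust_solution ::
  "(real \<Rightarrow> real) set \<Rightarrow> real \<Rightarrow> real \<Rightarrow> real measure \<Rightarrow> real measure set \<Rightarrow> real measure
     \<Rightarrow> (real \<Rightarrow> real) \<Rightarrow> bool" where
  "robust_solution \<F> r T Q \<P> M0 g \<longleftrightarrow> robust_feasible \<F> Q \<P> M0 g \<and>
     (\<forall>h. robust_feasible \<F> Q \<P> M0 h \<longrightarrow> price r T Q g \<le> price r T Q h)"

definition quantile :: "(real \<Rightarrow> real) \<Rightarrow> real \<Rightarrow> real" where
  "quantile F p = Inf {x. p \<le> F x}"

end

theory Submission
  imports Defs
begin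

text \<open>Under \<open>P\<^sup>\<mu>\<close> the log-price is normal with mean increasing in \<open>\<mu>\<close>, so the family is
  stochastically increasing; since \<open>dP(\<mu>\<^sub>1)/dQ\<close> is an increasing function of \<open>S\<^sub>T\<close>, its law is
  smallest under \<open>P(\<mu>\<^sub>1)\<close>, which is therefore least favourable. For the cost-efficiency problem,
  already the constraint at \<open>\<mu>\<^sub>1\<close> forces the \<open>P(\<mu>\<^sub>1)\<close>-tails of a feasible payoff above those
  of \<open>F\<^sub>0\<close>. Since \<open>dQ/dP(\<mu>\<^sub>1)\<close> decreases in \<open>S\<^sub>T\<close>, among events of given
  \<open>P(\<mu>\<^sub>1)\<close>-probability the upper sets \<open>{S\<^sub>T > a}\<close> are the cheapest under \<open>Q\<close>
  (Neyman-Pearson). The increasing payoff \<open>X\<^sup>*\<close> has law \<open>F\<^sub>0\<close> under \<open>P(\<mu>\<^sub>1)\<close> and upper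
  sets as superlevel sets, so by the layer-cake formula its price is minimal, and it is feasible
  for all \<open>\<mu> \<ge> \<mu>\<^sub>1\<close> by stochastic monotonicity. Equal prices force almost all superlevel
  sets to coincide, which gives uniqueness.\<close>

section \<open>Quantile functions and the uniform distribution\<close>

lemma quantile_le_iff:
  assumes M: "real_distribution M" and u: "0 < u" "u < 1"
  shows "quantile (cdf M) u \<le> x \<longleftrightarrow> u \<le> cdf M x"
proof -
  interpret real_distribution M by (rule M)
  let ?S = "{x. u \<le> cdf M x}"
  have "eventually (\<lambda>x. u < cdf M x) at_top"
    using order_tendstoD(1)[OF cdf_lim_at_top_prob u(2)] .
  then have ne: "?S \<noteq> {}" by (auto simp: eventually_at_top_linorder intro: less_imp_le)
  have "eventually (\<lambda>x. cdf M x < u) at_bot"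
    using order_tendstoD(2)[OF cdf_lim_at_bot u(1)] .
  then obtain z where z: "\<And>y. y \<le> z \<Longrightarrow> cdf M y < u" by (auto simp: eventually_at_bot_linorder)
  have bdd: "bdd_below ?S"
    by (rule bdd_belowI[of _ z]) (use z in \<open>metis linorder_linear mem_Collect_eq not_less\<close>)
  let ?q = "Inf ?S"
  have "u \<le> cdf M ?q"
  proof (rule ccontr)
    assume "\<not> u \<le> cdf M ?q"
    then have "eventually (\<lambda>y. cdf M y < u) (at_right ?q)"
      using cdf_is_right_cont[of ?q] by (auto simp: continuous_within intro: order_tendstoD(2))
    then obtain b where b: "?q < b" "\<And>y. ?q < y \<Longrightarrow> y < b \<Longrightarrow> cdf M y < u"
      by (auto simp: eventually_at_right_field)
    then obtain y where "y \<in> ?S" "y < b" using cInf_less_iff[OF ne bdd] by auto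
    moreover have "?q \<le> y" using \<open>y \<in> ?S\<close> bdd by (rule cInf_lower)
    ultimately show False using b(2)[of y] \<open>\<not> u \<le> cdf M ?q\<close> by (cases "y = ?q") auto
  qed
  then show ?thesis
    unfolding quantile_def using bdd cdf_nondecreasing[of ?q x]
    by (auto intro: cInf_lower order_trans)
qed

lemma le_cdf_quantile:
  "real_distribution M \<Longrightarrow> 0 < u \<Longrightarrow> u < 1 \<Longrightarrow> u \<le> cdf M (quantile (cdf M) u)"
  using quantile_le_iff by blast

lemma mono_on_quantile:
  assumes M: "real_distribution M"
  shows "mono_on {0<..<1} (quantile (cdf M))"
proof (rule mono_onI)
  fix u v :: real assume "u \<in> {0<..<1}" "v \<in> {0<..<1}" "u \<le> v"
  then show "quantile (cdf M) u \<le> quantile (cdf M) v"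
    using quantile_le_iff[OF M, of u] le_cdf_quantile[OF M, of v] by auto
qed

lemma quantile_nonneg:
  assumes M: "real_distribution M" and u: "0 < u" "u < 1" and neg: "\<forall>x<0. cdf M x = 0"
  shows "0 \<le> quantile (cdf M) u"
proof (rule ccontr)
  assume "\<not> 0 \<le> quantile (cdf M) u"
  then have "cdf M (quantile (cdf M) u) = 0" using neg by simp
  then show False using le_cdf_quantile[OF M u] u by simp
qed

lemma borel_measurable_quantile:
  assumes M: "real_distribution M"
  shows "quantile (cdf M) \<in> borel_measurable borel"
proof (rule borel_measurable_piecewise_mono[of "{{..0}, {0<..<1}, {1}, {1<..}}"])
  interpret real_distribution M by (rule M)
  have "quantile (cdf M) p = Inf UNIV" if "p \<le> 0" for p
    unfolding quantile_def using that cdf_nonneg by (intro arg_cong[where f=Inf]) (auto intro: order_trans)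
  moreover have "quantile (cdf M) p = Inf {}" if "p > 1" for p
  proof -
    have "\<not> p \<le> cdf M x" for x using that cdf_bounded_prob[of x] by linarith
    then show ?thesis unfolding quantile_def by simp
  qed
  ultimately show "mono_on c (quantile (cdf M))" if "c \<in> {{..0}, {0<..<1}, {1}, {1<..}}" for c
    using that mono_on_quantile[OF M] by (auto simp: mono_on_def)
qed auto

definition unif01 :: "real measure" where
  "unif01 = density lborel (indicator {0<..<1})"

lemma sets_unif01[simp, measurable_cong]: "sets unif01 = sets borel"
  by (simp add: unif01_def)

lemma real_distribution_unif01: "real_distribution unif01"
proof -
  have "prob_space unif01"
    by (rule prob_spaceI) (simp add: unif01_def emeasure_restricted)
  then show ?thesis by (simp add: real_distribution_def real_distribution_axioms_def)
qed

lemma measure_unif01: "A \<in> sets borel \<Longrightarrow> measure unif01 A = measure lborel ({0<..<1} \<inter> A)"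
  unfolding unif01_def by (subst measure_restricted) auto

lemma cdf_unif01: "cdf unif01 v = max 0 (min 1 v)"
proof -
  have "{0<..<1} \<inter> {..v} = (if v < 0 then {} else if v < 1 then {0<..v} else {0<..<1::real})"
    by auto
  then show ?thesis by (simp add: cdf_def measure_unif01)
qed

lemma integrable_unif01_iff:
  fixes f :: "real \<Rightarrow> real"
  assumes [measurable]: "f \<in> borel_measurable borel"
  shows "integrable unif01 f \<longleftrightarrow> set_integrable lborel {0<..<1} f"
proof -
  have eq: "unif01 = density lborel (\<lambda>x. ennreal (indicator {0<..<1} x))"
    by (simp add: unif01_def ennreal_indicator)
  show "integrable unif01 f \<longleftrightarrow> set_integrable lborel {0<..<1} f"
    unfolding set_integrable_def eq by (rule integrable_density) auto
qed

lemma distr_unif01_quantile: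
  assumes M: "real_distribution M"
  shows "distr unif01 borel (quantile (cdf M)) = M"
proof -
  interpret real_distribution M by (rule M)
  have "cdf (distr unif01 borel (quantile (cdf M))) x = cdf M x" for x
  proof -
    have "AE u in unif01. quantile (cdf M) u \<le> x \<longleftrightarrow> u \<le> cdf M x"
      unfolding unif01_def
      by (subst AE_density) (auto simp: quantile_le_iff[OF M] indicator_def)
    then have "measure unif01 {u. quantile (cdf M) u \<le> x} = measure unif01 {..cdf M x}"
      using borel_measurable_quantile[OF M] by (intro measure_eq_AE) auto
    moreover have "measure (distr unif01 borel (quantile (cdf M))) {..x}
        = measure unif01 {u. quantile (cdf M) u \<le> x}"
      using borel_measurable_quantile[OF M]
      by (subst measure_distr) (auto simp: vimage_def measurable_cong_sets[OF sets_unif01 refl])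
    ultimately show ?thesis
      using cdf_unif01[of "cdf M x"] cdf_nonneg[of x] cdf_bounded_prob[of x]
      by (simp add: cdf_def2)
  qed
  then have cdf_eq: "cdf (distr unif01 borel (quantile (cdf M))) = cdf M" ..
  have "real_distribution (distr unif01 borel (quantile (cdf M)))"
    by (rule prob_space.real_distribution_distr[OF real_distribution.axioms(1)[OF real_distribution_unif01]])
      (simp add: measurable_cong_sets[OF sets_unif01 refl] borel_measurable_quantile[OF M])
  then show ?thesis using M cdf_eq by (rule cdf_unique)
qed

lemma measure_cdf_le:
  assumes M: "real_distribution M" and atomless: "\<And>x. measure M {x} = 0"
    and v: "0 \<le> v" "v < 1"
  shows "measure M {x. cdf M x \<le> v} = v"
proof -
  interpret real_distribution M by (rule M)
  let ?S = "{x. cdf M x \<le> v}"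
  have cont: "isCont (cdf M) x" for x using isCont_cdf atomless by simp
  show ?thesis
  proof (cases "?S = {}")
    case True
    have "\<not> 0 < v"
    proof
      assume "0 < v"
      then have "eventually (\<lambda>x. cdf M x < v) at_bot"
        using order_tendstoD(2)[OF cdf_lim_at_bot] by blast
      then show False using True by (auto simp: eventually_at_bot_linorder intro: less_imp_le)
    qed
    then show ?thesis using True v by simp
  next
    case False
    have "eventually (\<lambda>x. v < cdf M x) at_top"
      using order_tendstoD(1)[OF cdf_lim_at_top_prob v(2)] .
    then obtain b where b: "\<And>y. b \<le> y \<Longrightarrow> v < cdf M y" by (auto simp: eventually_at_top_linorder)
    have bdd: "bdd_above ?S"
      by (rule bdd_aboveI[of _ b]) (use b in \<open>metis linorder_linear mem_Collect_eq not_less\<close>)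
    define t where "t = Sup ?S"
    have "closed ?S" using cont by (intro closed_Collect_le continuous_on_const) (auto intro: continuous_at_imp_continuous_on)
    then have "t \<in> ?S" using False bdd unfolding t_def by (intro closed_contains_Sup)
    have S_eq: "?S = {..t}"
      using \<open>t \<in> ?S\<close> bdd unfolding t_def by (auto intro: cSup_upper order_trans[OF cdf_nondecreasing])
    have "cdf M t = v"
    proof (rule ccontr)
      assume "cdf M t \<noteq> v"
      then have "eventually (\<lambda>y. cdf M y < v) (at t)"
        using \<open>t \<in> ?S\<close> cont[of t] by (auto simp: isCont_def intro: order_tendstoD(2))
      then have "eventually (\<lambda>y. cdf M y < v) (at_right t)"
        by (rule filter_leD[OF at_within_le_at])
      then obtain y where "t < y" "cdf M y < v"
        by (auto simp: eventually_at_right_field dest: dense)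
      then show False using S_eq by (metis atMost_iff less_imp_le mem_Collect_eq not_le)
    qed
    then show ?thesis unfolding S_eq by (simp add: cdf_def2)
  qed
qed

lemma distr_cdf_unif01:
  assumes M: "real_distribution M" and atomless: "\<And>x. measure M {x} = 0"
  shows "distr M borel (cdf M) = unif01"
proof -
  interpret real_distribution M by (rule M)
  have [measurable]: "cdf M \<in> borel_measurable borel"
    by (rule borel_measurable_mono) (auto simp: mono_def cdf_nondecreasing)
  have meas: "measure M {x. cdf M x \<le> v} = max 0 (min 1 v)" for v
  proof -
    consider "v < 0" | "0 \<le> v" "v < 1" | "1 \<le> v" by linarith
    then show ?thesis
    proof cases
      case 1
      have "\<not> cdf M x \<le> v" for x using cdf_nonneg[of x] 1 by linarith
      then have "{x. cdf M x \<le> v} = {}" by blast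
      then show ?thesis using 1 by simp
    next
      case 2 then show ?thesis using measure_cdf_le[OF M atomless] by simp
    next
      case 3
      then have "{x. cdf M x \<le> v} = space M" using cdf_bounded_prob by (auto intro: order_trans)
      then show ?thesis using 3 prob_space by simp
    qed
  qed
  have cdf_distr: "cdf (distr M borel (cdf M)) v = measure M {x. cdf M x \<le> v}" for v
    unfolding cdf_def2[of "distr M borel (cdf M)"] by (subst measure_distr) (auto simp: vimage_def)
  have cdf_eq: "cdf (distr M borel (cdf M)) = cdf unif01"
    by (rule ext) (simp only: cdf_distr meas cdf_unif01)
  have rd: "real_distribution (distr M borel (cdf M))"
    by (rule real_distribution_distr) (simp add: measurable_cong_sets[OF events_eq_borel refl])
  show ?thesis by (rule cdf_unique[OF rd real_distribution_unif01 cdf_eq])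
qed

section \<open>Neyman-Pearson lemma, layer-cake formula and almost-sure equality\<close>

lemma threshold_of_upper_set:
  fixes \<xi> :: "real \<Rightarrow> real"
  assumes anti: "\<And>x y. 0 < x \<Longrightarrow> x \<le> y \<Longrightarrow> \<xi> y \<le> \<xi> x"
    and nonneg: "\<And>x. 0 < x \<Longrightarrow> 0 \<le> \<xi> x"
    and up: "\<And>x y. x \<in> B \<Longrightarrow> 0 < x \<Longrightarrow> x \<le> y \<Longrightarrow> y \<in> B"
    and x0: "0 < x0" "x0 \<notin> B"
  shows "\<exists>c\<ge>0. (\<forall>x>0. x \<in> B \<longrightarrow> \<xi> x \<le> c) \<and> (\<forall>x>0. x \<notin> B \<longrightarrow> c \<le> \<xi> x)"
proof (intro exI conjI allI impI)
  let ?C = "{x. 0 < x \<and> x \<notin> B}"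
  have ne: "\<xi> ` ?C \<noteq> {}" using x0 by auto
  have bdd: "bdd_below (\<xi> ` ?C)" using nonneg by (auto simp: bdd_below_def)
  show "0 \<le> Inf (\<xi> ` ?C)" using ne nonneg by (intro cInf_greatest) auto
  show "Inf (\<xi> ` ?C) \<le> \<xi> x" if "0 < x" "x \<notin> B" for x
    using that bdd by (intro cInf_lower) auto
  show "\<xi> x \<le> Inf (\<xi> ` ?C)" if "0 < x" "x \<in> B" for x
  proof (rule cInf_greatest[OF ne])
    fix z assume "z \<in> \<xi> ` ?C"
    then obtain y where y: "0 < y" "y \<notin> B" "z = \<xi> y" by auto
    then have "y \<le> x" using up[OF that(2,1), of y] by (cases "x \<le> y") auto
    then show "\<xi> x \<le> z" using anti[of y x] y by simp
  qed
qed

lemma weighted_measure_diff: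
  fixes \<xi> :: "'a \<Rightarrow> real"
  assumes "finite_measure P" "integrable P \<xi>" "A \<in> sets P" "B \<in> sets P"
  shows "integrable P (\<lambda>x. (indicator A x - indicator B x) * (\<xi> x - c))"
    and "(\<integral>x. \<xi> x * indicator A x \<partial>P) - (\<integral>x. \<xi> x * indicator B x \<partial>P)
      = (\<integral>x. (indicator A x - indicator B x) * (\<xi> x - c) \<partial>P) + c * (measure P A - measure P B)"
proof -
  interpret finite_measure P by (rule assms(1))
  have \<xi>_ind: "integrable P (\<lambda>x. \<xi> x * indicator S x)" if "S \<in> sets P" for S
    using that assms(2) by (rule integrable_real_mult_indicator)
  have c_ind: "integrable P (\<lambda>x. c * indicator S x)" if "S \<in> sets P" for S
    using that by (intro integrable_mult_right integrable_real_indicator) (simp_all add: less_top[symmetric])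
  note \<xi>_diff = Bochner_Integration.integrable_diff[OF \<xi>_ind[OF assms(3)] \<xi>_ind[OF assms(4)]]
  note c_diff = Bochner_Integration.integrable_diff[OF c_ind[OF assms(3)] c_ind[OF assms(4)]]
  have eq: "(\<lambda>x. (indicator A x - indicator B x) * (\<xi> x - c))
      = (\<lambda>x. (\<xi> x * indicator A x - \<xi> x * indicator B x) - (c * indicator A x - c * indicator B x))"
    by (auto simp: fun_eq_iff algebra_simps)
  show "integrable P (\<lambda>x. (indicator A x - indicator B x) * (\<xi> x - c))"
    unfolding eq by (rule Bochner_Integration.integrable_diff[OF \<xi>_diff c_diff])
  show "(\<integral>x. \<xi> x * indicator A x \<partial>P) - (\<integral>x. \<xi> x * indicator B x \<partial>P)
      = (\<integral>x. (indicator A x - indicator B x) * (\<xi> x - c) \<partial>P) + c * (measure P A - measure P B)"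
    unfolding eq Bochner_Integration.integral_diff[OF \<xi>_diff c_diff]
      Bochner_Integration.integral_diff[OF \<xi>_ind[OF assms(3)] \<xi>_ind[OF assms(4)]]
      Bochner_Integration.integral_diff[OF c_ind[OF assms(3)] c_ind[OF assms(4)]]
    using sets.Int_space_eq2[OF assms(3)] sets.Int_space_eq2[OF assms(4)] by (simp add: algebra_simps)
qed

lemma level_set_null_if_inj_on:
  fixes f :: "real \<Rightarrow> 'b"
  assumes "finite_measure M" "sets M = sets borel" "inj_on f S" and atomless: "\<And>y. measure M {y} = 0"
  shows "{x \<in> S. f x = c} \<in> null_sets M"
proof (cases "\<exists>x0\<in>S. f x0 = c")
  case True
  then obtain x0 where "x0 \<in> S" "f x0 = c" by blast
  then have "{x \<in> S. f x = c} = {x0}" using assms(3) by (auto dest: inj_onD)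
  then show ?thesis
    using atomless[of x0] finite_measure.emeasure_eq_measure[OF assms(1)] assms(2)
    by (simp add: null_sets_def)
next
  case False
  then have empty: "{x \<in> S. f x = c} = {}" by blast
  show ?thesis unfolding empty by simp
qed

text \<open>The threshold \<open>c\<close> below separates the values of \<open>\<xi>\<close> on the upper set \<open>B\<close> from those
  off \<open>B\<close>; this makes \<open>(1\<^sub>A - 1\<^sub>B) (\<xi> - c)\<close> nonnegative, which is the whole
  Neyman-Pearson argument.\<close>

context
  fixes P :: "real measure" and \<xi> :: "real \<Rightarrow> real" and A B :: "real set"
  assumes P: "prob_space P" and sets_P [measurable_cong]: "sets P = sets borel" and pos: "AE x in P. 0 < x"
    and measurable [measurable]: "\<xi> \<in> borel_measurable borel" "A \<in> sets borel" "B \<in> sets borel"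
    and integrable: "integrable P \<xi>"
    and nonneg: "\<And>x. 0 < x \<Longrightarrow> 0 \<le> \<xi> x"
    and strict_anti: "\<And>x y. 0 < x \<Longrightarrow> x < y \<Longrightarrow> \<xi> y < \<xi> x"
    and up: "\<And>x y. x \<in> B \<Longrightarrow> 0 < x \<Longrightarrow> x \<le> y \<Longrightarrow> y \<in> B"
    and le: "measure P B \<le> measure P A"
begin

private lemma upper_set_full:
  assumes "\<And>x. 0 < x \<Longrightarrow> x \<in> B"
  shows "AE x in P. x \<in> A \<and> x \<in> B"
proof -
  interpret prob_space P by (rule P)
  have "AE x in P. x \<in> B" using pos by (rule eventually_mono) (rule assms)
  then have "measure P B = 1" by (simp add: prob_eq_1 sets_P)
  then have "measure P A = 1" using le prob_le_1[of A] by linarith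
  then have "AE x in P. x \<in> A" by (simp add: prob_eq_1 sets_P)
  with \<open>AE x in P. x \<in> B\<close> show ?thesis by eventually_elim simp
qed

private lemma upper_set_threshold:
  assumes "0 < x0" "x0 \<notin> B"
  shows "\<exists>c\<ge>0. AE x in P. 0 \<le> (indicator A x - indicator B x) * (\<xi> x - c)"
proof -
  have anti: "\<xi> y \<le> \<xi> x" if "0 < x" "x \<le> y" for x y
    using that strict_anti[of x y] by (cases "x = y") simp_all
  have "\<exists>c\<ge>0. (\<forall>x>0. x \<in> B \<longrightarrow> \<xi> x \<le> c) \<and> (\<forall>x>0. x \<notin> B \<longrightarrow> c \<le> \<xi> x)"
    using anti nonneg up assms by (rule threshold_of_upper_set)
  then obtain c where c: "0 \<le> c" "\<forall>x>0. x \<in> B \<longrightarrow> \<xi> x \<le> c" "\<forall>x>0. x \<notin> B \<longrightarrow> c \<le> \<xi> x"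
    by blast
  have "0 \<le> (indicator A x - indicator B x) * (\<xi> x - c)" if "0 < x" for x
    using c(2,3) that by (cases "x \<in> A"; cases "x \<in> B") simp_all
  then have "AE x in P. 0 \<le> (indicator A x - indicator B x) * (\<xi> x - c)"
    using pos by (auto elim: eventually_mono)
  then show ?thesis using c(1) by blast
qed

lemma neyman_pearson_le:
  "(\<integral>x. \<xi> x * indicator B x \<partial>P) \<le> (\<integral>x. \<xi> x * indicator A x \<partial>P)"
proof (cases "\<forall>x. 0 < x \<longrightarrow> x \<in> B")
  case True
  then have "AE x in P. x \<in> A \<and> x \<in> B" by (intro upper_set_full) auto
  then have "AE x in P. \<xi> x * indicator B x = \<xi> x * indicator A x"
    by (rule eventually_mono) simp
  then have "(\<integral>x. \<xi> x * indicator B x \<partial>P) = (\<integral>x. \<xi> x * indicator A x \<partial>P)"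
    by (intro integral_cong_AE) auto
  then show ?thesis by simp
next
  case False
  then obtain x0 where x0: "0 < x0" "x0 \<notin> B" by auto
  obtain c where c: "0 \<le> c" "AE x in P. 0 \<le> (indicator A x - indicator B x) * (\<xi> x - c)"
    using upper_set_threshold[OF x0] by blast
  have "0 \<le> (\<integral>x. (indicator A x - indicator B x) * (\<xi> x - c) \<partial>P)"
    using c(2) by (rule integral_nonneg_AE)
  moreover have "0 \<le> c * (measure P A - measure P B)" using c(1) le by simp
  ultimately show ?thesis
    using weighted_measure_diff(2)[OF prob_space.finite_measure[OF P] integrable, of A B c]
    by (simp add: sets_P)
qed

lemma neyman_pearson_eq:
  assumes eq: "(\<integral>x. \<xi> x * indicator B x \<partial>P) = (\<integral>x. \<xi> x * indicator A x \<partial>P)"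
    and atomless: "\<And>y. measure P {y} = 0"
  shows "AE x in P. x \<in> A \<longleftrightarrow> x \<in> B"
proof (cases "\<forall>x. 0 < x \<longrightarrow> x \<in> B")
  case True
  then have "AE x in P. x \<in> A \<and> x \<in> B" by (intro upper_set_full) auto
  then show ?thesis by (rule eventually_mono) simp
next
  case False
  then obtain x0 where x0: "0 < x0" "x0 \<notin> B" by auto
  obtain c where c: "0 \<le> c" "AE x in P. 0 \<le> (indicator A x - indicator B x) * (\<xi> x - c)"
    using upper_set_threshold[OF x0] by blast
  let ?\<Phi> = "\<lambda>x. (indicator A x - indicator B x) * (\<xi> x - c)"
  note diff = weighted_measure_diff[OF prob_space.finite_measure[OF P] integrable, of A B c]
  have "0 \<le> integral\<^sup>L P ?\<Phi>" using c(2) by (rule integral_nonneg_AE)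
  moreover have "0 \<le> c * (measure P A - measure P B)" using c(1) le by simp
  ultimately have "integral\<^sup>L P ?\<Phi> = 0" using diff(2) eq by (simp add: sets_P)
  then have "AE x in P. ?\<Phi> x = 0"
    using integral_nonneg_eq_0_iff_AE[OF diff(1) c(2)] by (simp add: sets_P)
  moreover have "inj_on \<xi> {0<..}"
  proof (rule inj_onI)
    fix x y assume "x \<in> {0<..}" "y \<in> {0<..}" "\<xi> x = \<xi> y"
    then show "x = y" using strict_anti[of x y] strict_anti[of y x] by (cases x y rule: linorder_cases) auto
  qed
  then have "AE x in P. x \<notin> {x \<in> {0<..}. \<xi> x = c}"
    by (intro AE_not_in level_set_null_if_inj_on prob_space.finite_measure[OF P] sets_P atomless)
  ultimately show ?thesis
    using pos by eventually_elim (auto simp: indicator_def split: if_splits)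
qed

end

lemma nn_integral_layer_cake:
  fixes f :: "'a \<Rightarrow> real"
  assumes M: "sigma_finite_measure M" and [measurable]: "f \<in> borel_measurable M"
    and nonneg: "AE x in M. 0 \<le> f x"
  shows "(\<integral>\<^sup>+x. ennreal (f x) \<partial>M)
    = (\<integral>\<^sup>+t. indicator {0..} t * emeasure M {x\<in>space M. t < f x} \<partial>lborel)"
proof -
  interpret pair_sigma_finite M lborel
    using M sigma_finite_lborel by (simp add: pair_sigma_finite_def)
  define G :: "'a \<times> real \<Rightarrow> ennreal"
    where "G p = (if 0 \<le> snd p \<and> snd p < f (fst p) then 1 else 0)" for p
  have G_measurable: "G \<in> borel_measurable (M \<Otimes>\<^sub>M lborel)"
    unfolding G_def by measurable
  have "(\<integral>\<^sup>+x. ennreal (f x) \<partial>M) = (\<integral>\<^sup>+x. (\<integral>\<^sup>+t. G (x, t) \<partial>lborel) \<partial>M)"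
  proof (intro nn_integral_cong_AE eventually_mono[OF nonneg])
    fix x assume "0 \<le> f x"
    have "(\<integral>\<^sup>+t. G (x, t) \<partial>lborel) = (\<integral>\<^sup>+t. indicator {0..<f x} t \<partial>lborel)"
      by (intro nn_integral_cong) (auto simp: G_def indicator_def)
    then show "ennreal (f x) = (\<integral>\<^sup>+t. G (x, t) \<partial>lborel)" using \<open>0 \<le> f x\<close> by simp
  qed
  also have "\<dots> = (\<integral>\<^sup>+t. (\<integral>\<^sup>+x. G (x, t) \<partial>M) \<partial>lborel)"
    using Fubini[OF G_measurable] by simp
  also have "\<dots> = (\<integral>\<^sup>+t. indicator {0..} t * emeasure M {x\<in>space M. t < f x} \<partial>lborel)"
  proof (rule nn_integral_cong)
    fix t :: real
    have "(\<integral>\<^sup>+x. G (x, t) \<partial>M) = (\<integral>\<^sup>+x. indicator {0..} t * indicator {x\<in>space M. t < f x} x \<partial>M)"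
      by (intro nn_integral_cong) (auto simp: G_def indicator_def)
    then show "(\<integral>\<^sup>+x. G (x, t) \<partial>M) = indicator {0..} t * emeasure M {x\<in>space M. t < f x}"
      by (simp add: nn_integral_cmult)
  qed
  finally show ?thesis .
qed

lemma integrable_mult_if_square_integrable:
  fixes f g :: "'a \<Rightarrow> real"
  assumes [measurable]: "f \<in> borel_measurable M" "g \<in> borel_measurable M"
    and "integrable M (\<lambda>x. (f x)\<^sup>2)" "integrable M (\<lambda>x. (g x)\<^sup>2)"
  shows "integrable M (\<lambda>x. f x * g x)"
proof (rule Bochner_Integration.integrable_bound)
  show "integrable M (\<lambda>x. (f x)\<^sup>2 + (g x)\<^sup>2)"
    using assms(3,4) by (rule Bochner_Integration.integrable_add)
  show "AE x in M. norm (f x * g x) \<le> norm ((f x)\<^sup>2 + (g x)\<^sup>2)"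
  proof (rule AE_I2)
    fix x
    have "2 * \<bar>f x\<bar> * \<bar>g x\<bar> \<le> \<bar>f x\<bar>\<^sup>2 + \<bar>g x\<bar>\<^sup>2" by (rule sum_squares_bound)
    moreover have "0 \<le> \<bar>f x\<bar> * \<bar>g x\<bar>" by simp
    ultimately have "\<bar>f x\<bar> * \<bar>g x\<bar> \<le> (f x)\<^sup>2 + (g x)\<^sup>2" unfolding power2_abs by linarith
    then show "norm (f x * g x) \<le> norm ((f x)\<^sup>2 + (g x)\<^sup>2)" by (simp add: abs_mult)
  qed
qed simp

lemma AE_eq_if_nn_integral_eq:
  fixes f g :: "'a \<Rightarrow> ennreal"
  assumes [measurable]: "f \<in> borel_measurable M" "g \<in> borel_measurable M"
    and le: "\<And>x. f x \<le> g x" and eq: "(\<integral>\<^sup>+x. g x \<partial>M) = (\<integral>\<^sup>+x. f x \<partial>M)"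
    and finite: "(\<integral>\<^sup>+x. f x \<partial>M) \<noteq> \<infinity>"
  shows "AE x in M. g x = f x"
proof -
  have "(\<integral>\<^sup>+x. g x - f x \<partial>M) = 0"
    using eq finite le by (subst nn_integral_diff) auto
  then have "AE x in M. g x - f x = 0" by (subst (asm) nn_integral_0_iff_AE) auto
  then show ?thesis
    by (rule eventually_mono) (metis antisym ennreal_minus_eq_0 le)
qed

lemma AE_eq_if_AE_superlevel_sets_eq:
  fixes f g :: "'a \<Rightarrow> real"
  assumes M: "sigma_finite_measure M" and [measurable]: "f \<in> borel_measurable M" "g \<in> borel_measurable M"
    and nonneg: "AE x in M. 0 \<le> f x \<and> 0 \<le> g x"
    and levels: "AE t in lborel. 0 \<le> t \<longrightarrow> (AE x in M. t < f x \<longleftrightarrow> t < g x)"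
  shows "AE x in M. f x = g x"
proof -
  interpret pair_sigma_finite lborel M
    using M sigma_finite_lborel by (simp add: pair_sigma_finite_def)
  have "AE t in lborel. AE x in M. 0 \<le> t \<longrightarrow> (t < f x \<longleftrightarrow> t < g x)"
    using levels by (rule eventually_mono) (auto intro: AE_I2)
  then have "AE x in M. AE t in lborel. 0 \<le> t \<longrightarrow> (t < f x \<longleftrightarrow> t < g x)"
    by (subst (asm) AE_commute) measurable
  with nonneg show ?thesis
  proof eventually_elim
    case (elim x)
    show "f x = g x"
    proof (rule ccontr)
      assume "f x \<noteq> g x"
      define a where "a = min (f x) (g x)"
      define b where "b = max (f x) (g x)"
      have "a < b" "0 \<le> a" using \<open>f x \<noteq> g x\<close> elim(1) by (auto simp: a_def b_def)
      have "AE t in lborel. t \<notin> {a<..<b}"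
        using elim(2) by (rule eventually_mono) (use \<open>0 \<le> a\<close> in \<open>auto simp: a_def b_def\<close>)
      then have "emeasure lborel {a<..<b} = 0"
        by (subst (asm) AE_iff_measurable[of "{a<..<b}"]) auto
      then show False using \<open>a < b\<close> by simp
    qed
  qed
qed

section \<open>The lognormal family\<close>

locale lognormal_family =
  fixes S0 s T :: real
  assumes S0_pos: "0 < S0" and s_pos: "0 < s" and T_pos: "0 < T"
begin

abbreviation law :: "real \<Rightarrow> real measure" where
  "law \<equiv> ST_law S0 s T"

definition log_mean :: "real \<Rightarrow> real" where
  "log_mean \<mu> = ln S0 + (\<mu> - s\<^sup>2 / 2) * T"

definition log_sd :: real where
  "log_sd = s * sqrt T"

definition log_law :: "real \<Rightarrow> real measure" where
  "log_law \<mu> = density lborel (normal_density (log_mean \<mu>) log_sd)"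

text \<open>\<open>lr \<mu> \<nu>\<close> is the density of \<open>law \<nu>\<close> with respect to \<open>law \<mu>\<close>.\<close>
definition lr :: "real \<Rightarrow> real \<Rightarrow> real \<Rightarrow> real" where
  "lr \<mu> \<nu> x = exp (((ln x - log_mean \<mu>)\<^sup>2 - (ln x - log_mean \<nu>)\<^sup>2) / (2 * log_sd\<^sup>2))"

lemma log_sd_pos: "0 < log_sd"
  using s_pos T_pos by (simp add: log_sd_def)

lemma log_mean_mono: "\<mu> \<le> \<nu> \<Longrightarrow> log_mean \<mu> \<le> log_mean \<nu>"
  using T_pos by (simp add: log_mean_def mult_right_mono)

lemma log_mean_strict_mono: "\<mu> < \<nu> \<Longrightarrow> log_mean \<mu> < log_mean \<nu>"
  using T_pos by (simp add: log_mean_def)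

lemma law_eq_distr: "law \<mu> = distr (log_law \<mu>) borel exp"
  by (simp add: ST_law_def log_law_def log_mean_def log_sd_def)

lemma sets_log_law [simp, measurable_cong]: "sets (log_law \<mu>) = sets borel"
  by (simp add: log_law_def)

lemma prob_space_log_law: "prob_space (log_law \<mu>)"
  unfolding log_law_def by (rule prob_space_normal_density) (rule log_sd_pos)

lemma sets_law [simp, measurable_cong]: "sets (law \<mu>) = sets borel"
  by (simp add: law_eq_distr)

lemma space_law [simp]: "space (law \<mu>) = UNIV"
  by (simp add: law_eq_distr)

lemma prob_space_law: "prob_space (law \<mu>)"
  unfolding law_eq_distr by (rule prob_space.prob_space_distr[OF prob_space_log_law]) simp

lemma emeasure_law: "emeasure (law \<mu>) A = ennreal (measure (law \<mu>) A)"
  by (rule finite_measure.emeasure_eq_measure[OF prob_space.finite_measure[OF prob_space_law]])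

lemma real_distribution_law: "real_distribution (law \<mu>)"
  using prob_space_law by (simp add: real_distribution_def real_distribution_axioms_def)

lemma AE_law_pos: "AE x in law \<mu>. 0 < x"
  unfolding law_eq_distr by (subst AE_distr_iff) auto

lemma measure_law_singleton: "measure (law \<mu>) {x} = 0"
proof -
  have "emeasure (log_law \<mu>) {y} = 0" for y
    unfolding log_law_def by (subst emeasure_density) (auto intro!: nn_integral_null_set)
  moreover have "exp -` {x} = (if 0 < x then {ln x} else {})" by auto
  ultimately show ?thesis
    unfolding law_eq_distr by (subst measure_distr) (auto simp: measure_def)
qed

lemma emeasure_log_law_Ioo_pos:
  assumes "c < d"
  shows "0 < emeasure (log_law \<mu>) {c<..<d}"
proof (rule ccontr)
  assume "\<not> ?thesis"
  then have "{c<..<d} \<in> null_sets (log_law \<mu>)" by (auto simp: null_sets_def log_law_def)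
  then have "AE x in lborel. x \<in> {c<..<d} \<longrightarrow> ennreal (normal_density (log_mean \<mu>) log_sd x) = 0"
    unfolding log_law_def by (subst (asm) null_sets_density_iff) auto
  then have "AE x in lborel. x \<notin> {c<..<d}"
  proof (rule eventually_mono)
    fix x assume "x \<in> {c<..<d} \<longrightarrow> ennreal (normal_density (log_mean \<mu>) log_sd x) = 0"
    then show "x \<notin> {c<..<d}" using normal_density_pos[OF log_sd_pos, of "log_mean \<mu>" x] by auto
  qed
  then have "emeasure lborel {c<..<d} = 0"
    by (subst (asm) AE_iff_measurable[of "{c<..<d}"]) auto
  then show False using assms by simp
qed

lemma measure_law_Ioo_pos:
  assumes "0 < a" "a < b"
  shows "0 < measure (law \<mu>) {a<..<b}"
proof -
  have "a < exp y \<longleftrightarrow> ln a < y" "exp y < b \<longleftrightarrow> y < ln b" for y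
    using exp_less_cancel_iff[of "ln a" y] exp_less_cancel_iff[of y "ln b"] assms by simp_all
  then have "exp -` {a<..<b} = {ln a<..<ln b}" by auto
  then have "measure (law \<mu>) {a<..<b} = measure (log_law \<mu>) {ln a<..<ln b}"
    unfolding law_eq_distr by (subst measure_distr) auto
  also have "\<dots> > 0"
    using emeasure_log_law_Ioo_pos[of "ln a" "ln b" \<mu>] assms
    by (simp add: finite_measure.emeasure_eq_measure[OF prob_space.finite_measure[OF prob_space_log_law]])
  finally show ?thesis .
qed

lemma cdf_law_pos_range:
  assumes "0 < x"
  shows "cdf (law \<mu>) x \<in> {0<..<1}"
proof -
  interpret prob_space "law \<mu>" by (rule prob_space_law)
  have "0 < measure (law \<mu>) {x/2<..<x}" using assms by (intro measure_law_Ioo_pos) auto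
  also have "\<dots> \<le> cdf (law \<mu>) x" unfolding cdf_def2 by (intro finite_measure_mono) auto
  finally have "0 < cdf (law \<mu>) x" .
  have "0 < measure (law \<mu>) {x<..<x+1}" using assms by (intro measure_law_Ioo_pos) auto
  also have "\<dots> \<le> measure (law \<mu>) (space (law \<mu>) - {..x})" by (intro finite_measure_mono) auto
  also have "\<dots> = 1 - cdf (law \<mu>) x" unfolding cdf_def2 by (rule prob_compl) simp
  finally show ?thesis using \<open>0 < cdf (law \<mu>) x\<close> by simp
qed

lemma distr_law_cdf: "distr (law \<mu>) borel (cdf (law \<mu>)) = unif01"
  by (rule distr_cdf_unif01[OF real_distribution_law measure_law_singleton])

lemma borel_measurable_lr [measurable]: "lr \<mu> \<nu> \<in> borel_measurable borel"
  unfolding lr_def by measurable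

lemma lr_pos: "0 < lr \<mu> \<nu> x"
  by (simp add: lr_def)

lemma lr_eq: "lr \<mu> \<nu> x = exp ((log_mean \<nu> - log_mean \<mu>) * (2 * ln x - log_mean \<mu> - log_mean \<nu>) / (2 * log_sd\<^sup>2))"
  unfolding lr_def by (simp add: power2_eq_square algebra_simps)

lemma lr_swap: "lr \<nu> \<mu> x = 1 / lr \<mu> \<nu> x"
proof -
  have "lr \<mu> \<nu> x * lr \<nu> \<mu> x = 1"
    unfolding lr_def by (simp add: mult_exp_exp add_divide_distrib[symmetric])
  then show ?thesis using lr_pos[of \<mu> \<nu> x] by (simp add: field_simps)
qed

lemma normal_density_mult_lr:
  "normal_density (log_mean \<mu>) log_sd y * lr \<mu> \<nu> (exp y) = normal_density (log_mean \<nu>) log_sd y"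
proof -
  have "exp (- (y - log_mean \<mu>)\<^sup>2 / (2 * log_sd\<^sup>2)) * lr \<mu> \<nu> (exp y)
      = exp (- (y - log_mean \<nu>)\<^sup>2 / (2 * log_sd\<^sup>2))"
    unfolding lr_def using log_sd_pos by (simp add: exp_add[symmetric] field_simps)
  then show ?thesis unfolding normal_density_def by simp
qed

lemma density_law_lr: "density (law \<mu>) (\<lambda>x. ennreal (lr \<mu> \<nu> x)) = law \<nu>"
proof -
  have "density (law \<mu>) (\<lambda>x. ennreal (lr \<mu> \<nu> x))
      = distr (density (log_law \<mu>) (\<lambda>y. ennreal (lr \<mu> \<nu> (exp y)))) borel exp"
    unfolding law_eq_distr by (subst density_distr) auto
  also have "density (log_law \<mu>) (\<lambda>y. ennreal (lr \<mu> \<nu> (exp y))) = log_law \<nu>"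
    unfolding log_law_def
    by (subst density_density_eq) (auto simp: normal_density_mult_lr ennreal_mult'[symmetric])
  finally show ?thesis by (simp add: law_eq_distr)
qed

lemma AE_law_iff: "(AE x in law \<mu>. P x) \<longleftrightarrow> (AE x in law \<nu>. P x)"
proof -
  have "AE x in law \<nu>. P x" if "AE x in law \<mu>. P x" for \<mu> \<nu>
  proof -
    have "AE x in density (law \<mu>) (\<lambda>x. ennreal (lr \<mu> \<nu> x)). P x"
      using that by (subst AE_density) (auto elim: AE_mp)
    then show ?thesis by (simp only: density_law_lr)
  qed
  then show ?thesis by blast
qed

lemma lik_law_AE: "AE x in law \<mu>. lik (law \<mu>) (law \<nu>) x = lr \<mu> \<nu> x"
proof -
  have "AE x in law \<mu>. ennreal (lr \<mu> \<nu> x) = RN_deriv (law \<mu>) (law \<nu>) x"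
    by (rule sigma_finite_measure.RN_deriv_unique[OF prob_space_imp_sigma_finite[OF prob_space_law]])
      (auto simp: density_law_lr)
  then show ?thesis
    by (rule eventually_mono) (metis enn2real_ennreal lik_def lr_pos less_imp_le)
qed

lemma integrable_lr: "integrable (law \<mu>) (lr \<mu> \<nu>)"
proof (rule integrableI_nonneg)
  have "(\<integral>\<^sup>+x. ennreal (lr \<mu> \<nu> x) \<partial>law \<mu>) = emeasure (density (law \<mu>) (\<lambda>x. ennreal (lr \<mu> \<nu> x))) UNIV"
    by (subst emeasure_density) auto
  also have "\<dots> = emeasure (law \<nu>) UNIV" by (simp only: density_law_lr)
  finally have "(\<integral>\<^sup>+x. ennreal (lr \<mu> \<nu> x) \<partial>law \<mu>) = emeasure (law \<nu>) UNIV" .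
  then show "(\<integral>\<^sup>+x. ennreal (lr \<mu> \<nu> x) \<partial>law \<mu>) < \<infinity>"
    by (simp add: prob_space.emeasure_space_1[OF prob_space_law, simplified])
qed (auto intro: less_imp_le[OF lr_pos])

lemma lr_square: "(lr \<mu> \<nu> x)\<^sup>2 = exp ((log_mean \<nu> - log_mean \<mu>)\<^sup>2 / log_sd\<^sup>2) * lr \<mu> (2 * \<nu> - \<mu>) x"
proof -
  have reflect: "log_mean (2 * \<nu> - \<mu>) = 2 * log_mean \<nu> - log_mean \<mu>"
    by (simp add: log_mean_def algebra_simps)
  have "(lr \<mu> \<nu> x)\<^sup>2
      = exp (2 * ((log_mean \<nu> - log_mean \<mu>) * (2 * ln x - log_mean \<mu> - log_mean \<nu>) / (2 * log_sd\<^sup>2)))"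
    unfolding lr_eq by (simp add: power2_eq_square exp_add[symmetric])
  also have "\<dots> = exp ((log_mean \<nu> - log_mean \<mu>)\<^sup>2 / log_sd\<^sup>2
      + (log_mean (2 * \<nu> - \<mu>) - log_mean \<mu>) * (2 * ln x - log_mean \<mu> - log_mean (2 * \<nu> - \<mu>))
        / (2 * log_sd\<^sup>2))"
    unfolding reflect using log_sd_pos
    by (intro arg_cong[where f=exp]) (simp add: field_simps power2_eq_square)
  finally show ?thesis by (simp add: exp_add lr_eq)
qed

lemma integrable_lr_square: "integrable (law \<mu>) (\<lambda>x. (lr \<mu> \<nu> x)\<^sup>2)"
  unfolding lr_square by (intro integrable_mult_right integrable_lr)

lemma lr_strict_mono_on:
  assumes "\<mu> < \<nu>"
  shows "strict_mono_on {0<..} (lr \<mu> \<nu>)"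
proof (rule strict_mono_onI)
  fix x y :: real assume "x \<in> {0<..}" "y \<in> {0<..}" "x < y"
  then have "(log_mean \<nu> - log_mean \<mu>) * (2 * ln x - log_mean \<mu> - log_mean \<nu>)
      < (log_mean \<nu> - log_mean \<mu>) * (2 * ln y - log_mean \<mu> - log_mean \<nu>)"
    using log_mean_strict_mono[OF assms] by (intro mult_strict_left_mono) auto
  then show "lr \<mu> \<nu> x < lr \<mu> \<nu> y"
    unfolding lr_eq using log_sd_pos by (simp add: divide_strict_right_mono)
qed

lemma law_eq_distr_shift:
  "law \<nu> = distr (log_law \<mu>) borel (\<lambda>y. exp (log_mean \<nu> - log_mean \<mu> + y))"
proof -
  define d where "d = log_mean \<nu> - log_mean \<mu>"
  have "log_law \<nu> = density (distr lborel borel ((+) d)) (normal_density (log_mean \<nu>) log_sd)"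
    unfolding log_law_def by (simp add: lborel_distr_plus)
  also have "\<dots> = distr (density lborel (\<lambda>y. normal_density (log_mean \<nu>) log_sd (d + y))) borel ((+) d)"
    by (subst density_distr) auto
  also have "(\<lambda>y. normal_density (log_mean \<nu>) log_sd (d + y)) = normal_density (log_mean \<mu>) log_sd"
    by (auto simp: normal_density_def fun_eq_iff d_def)
  finally have shift: "log_law \<nu> = distr (log_law \<mu>) borel ((+) d)"
    by (simp add: log_law_def)
  show ?thesis
    unfolding law_eq_distr shift by (subst distr_distr) (auto simp: comp_def d_def)
qed

text \<open>Stochastic monotonicity: \<open>law \<nu>\<close> is the image of \<open>law \<mu>\<close> under a dilation
  \<open>x \<mapsto> e\<^sup>d x\<close> with \<open>d \<ge> 0\<close>.\<close>
lemma integral_law_mono: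
  fixes G :: "real \<Rightarrow> real"
  assumes "\<mu> \<le> \<nu>" and G: "mono_on {0<..} G" and [measurable]: "G \<in> borel_measurable borel"
    and "integrable (law \<mu>) G" "integrable (law \<nu>) G"
  shows "integral\<^sup>L (law \<mu>) G \<le> integral\<^sup>L (law \<nu>) G"
proof -
  define d where "d = log_mean \<nu> - log_mean \<mu>"
  have "0 \<le> d" using log_mean_mono[OF assms(1)] by (simp add: d_def)
  have "integral\<^sup>L (law \<nu>) G = (\<integral>y. G (exp (d + y)) \<partial>log_law \<mu>)"
    and "integrable (log_law \<mu>) (\<lambda>y. G (exp (d + y)))"
    using assms(5) unfolding law_eq_distr_shift[of \<nu> \<mu>] d_def
    by (simp_all add: integral_distr integrable_distr_eq)
  moreover have "integral\<^sup>L (law \<mu>) G = (\<integral>y. G (exp y) \<partial>log_law \<mu>)"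
    and "integrable (log_law \<mu>) (\<lambda>y. G (exp y))"
    using assms(4) unfolding law_eq_distr by (simp_all add: integral_distr integrable_distr_eq)
  moreover have "G (exp y) \<le> G (exp (d + y))" for y
    using \<open>0 \<le> d\<close> by (intro mono_onD[OF G]) auto
  ultimately show ?thesis by (simp add: integral_mono)
qed

lemma borel_measurable_lik [measurable]: "lik (law \<mu>) N \<in> borel_measurable borel"
proof -
  have "RN_deriv (law \<mu>) N \<in> borel_measurable borel"
    using borel_measurable_RN_deriv[of "law \<mu>" N] by (simp add: measurable_cong_sets[OF sets_law refl])
  then show ?thesis unfolding lik_def[abs_def] by measurable
qed

lemma mono_cdf_law: "mono (cdf (law \<mu>))"
  by (simp add: mono_def finite_borel_measure.cdf_nondecreasing
      real_distribution.finite_borel_measure_M[OF real_distribution_law])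

lemma borel_measurable_cdf_law [measurable]: "cdf (law \<mu>) \<in> borel_measurable borel"
  by (rule borel_measurable_mono[OF mono_cdf_law])

lemma pref_FFSD_distr_law:
  assumes "\<mu> \<le> \<nu>" and G: "mono_on {0<..} G" and [measurable]: "G \<in> borel_measurable borel"
  shows "pref FFSD (distr (law \<mu>) borel G) (distr (law \<nu>) borel G)"
  unfolding pref_def FFSD_def
proof (intro ballI impI)
  fix f :: "real \<Rightarrow> real" assume "f \<in> {f. mono f}"
  then have "mono f" by simp
  then have [measurable]: "f \<in> borel_measurable borel" by (rule borel_measurable_mono)
  assume "integrable (distr (law \<mu>) borel G) f" "integrable (distr (law \<nu>) borel G) f"
  then have "integrable (law \<mu>) (\<lambda>x. f (G x))" "integrable (law \<nu>) (\<lambda>x. f (G x))"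
    by (simp_all add: integrable_distr_eq)
  moreover have "mono_on {0<..} (\<lambda>x. f (G x))"
  proof (rule mono_onI)
    fix a b :: real assume "a \<in> {0<..}" "b \<in> {0<..}" "a \<le> b"
    then show "f (G a) \<le> f (G b)" by (intro monoD[OF \<open>mono f\<close>] mono_onD[OF G])
  qed
  ultimately have "(\<integral>x. f (G x) \<partial>law \<mu>) \<le> (\<integral>x. f (G x) \<partial>law \<nu>)"
    by (intro integral_law_mono[OF assms(1)]) auto
  then show "integral\<^sup>L (distr (law \<mu>) borel G) f \<le> integral\<^sup>L (distr (law \<nu>) borel G) f"
    by (simp add: integral_distr)
qed

end

locale lognormal_market = lognormal_family +
  fixes r \<mu>1 :: real
  assumes r_less_\<mu>1: "r < \<mu>1"
begin

lemma lik_AE_law: "AE x in law \<mu>. lik (law r) (law \<mu>1) x = lr r \<mu>1 x"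
  using lik_law_AE AE_law_iff by blast

lemma least_favorable: "least_favorable FFSD (law r) (law ` {\<mu>1..}) (law \<mu>1)"
  unfolding least_favorable_def
proof (intro conjI ballI)
  show "law \<mu>1 \<in> law ` {\<mu>1..}" by auto
  fix P assume "P \<in> law ` {\<mu>1..}"
  then obtain \<mu> where "\<mu>1 \<le> \<mu>" "P = law \<mu>" by auto
  have "distr (law \<nu>) borel (lik (law r) (law \<mu>1)) = distr (law \<nu>) borel (lr r \<mu>1)" for \<nu>
    by (intro distr_cong_AE lik_AE_law) auto
  moreover have "mono_on {0<..} (lr r \<mu>1)"
    using lr_strict_mono_on[OF r_less_\<mu>1] by (rule strict_mono_on_imp_mono_on)
  ultimately show "pref FFSD (distr (law \<mu>1) borel (lik (law r) (law \<mu>1)))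
      (distr P borel (lik (law r) (law \<mu>1)))"
    using pref_FFSD_distr_law[OF \<open>\<mu>1 \<le> \<mu>\<close>] \<open>P = law \<mu>\<close> by simp
qed

lemma lik_strict_mono:
  "\<exists>h. strict_mono_on {0<..} h \<and> (AE x in law r. lik (law r) (law \<mu>1) x = h x)"
  using lr_strict_mono_on[OF r_less_\<mu>1] lik_AE_law by blast

lemma lik_atomless: "measure (law \<mu>1) {x. lik (law r) (law \<mu>1) x = y} = 0"
proof -
  have "{x \<in> {0<..}. lr r \<mu>1 x = y} \<in> null_sets (law \<mu>1)"
    using strict_mono_on_imp_inj_on[OF lr_strict_mono_on[OF r_less_\<mu>1]]
    by (intro level_set_null_if_inj_on prob_space.finite_measure prob_space_law sets_law
        measure_law_singleton)
  moreover have "AE x in law \<mu>1. lik (law r) (law \<mu>1) x = y \<longleftrightarrow> x \<in> {x \<in> {0<..}. lr r \<mu>1 x = y}"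
    using lik_AE_law[of \<mu>1] AE_law_pos[of \<mu>1] by eventually_elim auto
  ultimately show ?thesis
    by (subst measure_eq_AE[where B="{x \<in> {0<..}. lr r \<mu>1 x = y}"]) (auto simp: measure_def)
qed

lemma integrable_inverse_lik_square: "integrable (law \<mu>1) (\<lambda>x. (1 / lik (law r) (law \<mu>1) x)\<^sup>2)"
proof -
  have "AE x in law \<mu>1. (1 / lik (law r) (law \<mu>1) x)\<^sup>2 = (lr \<mu>1 r x)\<^sup>2"
    using lik_AE_law[of \<mu>1] by (rule eventually_mono) (simp add: lr_swap[of \<mu>1 r])
  then show ?thesis using integrable_lr_square[of \<mu>1 r] by (subst integrable_cong_AE) auto
qed

lemma measure_law_r:
  assumes "S \<in> sets borel"
  shows "measure (law r) S = (\<integral>x. lr \<mu>1 r x * indicator S x \<partial>law \<mu>1)"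
proof -
  have "measure (law r) S = integral\<^sup>L (law r) (indicator S)" using assms by simp
  also have "\<dots> = (\<integral>x. lr \<mu>1 r x *\<^sub>R indicator S x \<partial>law \<mu>1)"
    unfolding density_law_lr[of \<mu>1 r, symmetric] using assms
    by (intro integral_density) (auto intro: less_imp_le[OF lr_pos])
  finally show ?thesis by simp
qed

lemma lr_strict_anti: "0 < x \<Longrightarrow> x < y \<Longrightarrow> lr \<mu>1 r y < lr \<mu>1 r x"
  using strict_mono_onD[OF lr_strict_mono_on[OF r_less_\<mu>1], of x y] lr_pos[of r \<mu>1]
  by (simp add: lr_swap[of \<mu>1 r] frac_less2)

end

section \<open>Robust cost-efficiency\<close>

locale robust_cost_efficiency = lognormal_market +
  fixes M0 :: "real measure"
  assumes real_distribution_M0: "real_distribution M0"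
    and cdf_M0_neg: "\<forall>x<0. cdf M0 x = 0"
    and quantile_square_integrable: "set_integrable lborel {0<..<1} (\<lambda>u. (quantile (cdf M0) u)\<^sup>2)"
begin

definition opt_payoff :: "real \<Rightarrow> real" where
  "opt_payoff x = quantile (cdf M0) (cdf (law \<mu>1) x)"

lemma borel_measurable_opt_payoff [measurable]: "opt_payoff \<in> borel_measurable borel"
  unfolding opt_payoff_def[abs_def] using borel_measurable_quantile[OF real_distribution_M0]
  by measurable

lemma distr_opt_payoff: "distr (law \<mu>1) borel opt_payoff = M0"
proof -
  note borel_measurable_quantile[OF real_distribution_M0, measurable]
  have "distr (law \<mu>1) borel opt_payoff
      = distr (distr (law \<mu>1) borel (cdf (law \<mu>1))) borel (quantile (cdf M0))"
    unfolding opt_payoff_def[abs_def] by (subst distr_distr) (auto simp: comp_def)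
  also have "\<dots> = M0"
    by (simp add: distr_law_cdf distr_unif01_quantile[OF real_distribution_M0])
  finally show ?thesis .
qed

lemma mono_on_opt_payoff: "mono_on {0<..} opt_payoff"
proof (rule mono_onI)
  fix x y :: real assume "x \<in> {0<..}" "y \<in> {0<..}" "x \<le> y"
  then show "opt_payoff x \<le> opt_payoff y"
    unfolding opt_payoff_def
    by (intro mono_onD[OF mono_on_quantile[OF real_distribution_M0]] cdf_law_pos_range
        monoD[OF mono_cdf_law]) auto
qed

lemma opt_payoff_nonneg: "0 < x \<Longrightarrow> 0 \<le> opt_payoff x"
  unfolding opt_payoff_def using cdf_law_pos_range[of x \<mu>1]
  by (intro quantile_nonneg[OF real_distribution_M0 _ _ cdf_M0_neg]) auto

lemma integrable_opt_payoff_square: "integrable (law \<mu>1) (\<lambda>x. (opt_payoff x)\<^sup>2)"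
proof -
  note borel_measurable_quantile[OF real_distribution_M0, measurable]
  have "integrable unif01 (\<lambda>u. (quantile (cdf M0) u)\<^sup>2)"
    using quantile_square_integrable by (subst integrable_unif01_iff) auto
  then have "integrable (distr unif01 borel (quantile (cdf M0))) (\<lambda>y. y\<^sup>2)"
    by (subst integrable_distr_eq) (auto simp: measurable_cong_sets[OF sets_unif01 refl])
  then have "integrable (distr (law \<mu>1) borel opt_payoff) (\<lambda>y. y\<^sup>2)"
    by (simp add: distr_unif01_quantile[OF real_distribution_M0] distr_opt_payoff)
  then show ?thesis by (simp add: integrable_distr_eq)
qed

lemma payoff_opt_payoff: "payoff (law r) opt_payoff"
proof -
  have "integrable (law \<mu>1) (\<lambda>x. lr \<mu>1 r x * opt_payoff x)"
    by (intro integrable_mult_if_square_integrable integrable_lr_square integrable_opt_payoff_square)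
      measurable
  then have "integrable (law r) opt_payoff"
    unfolding density_law_lr[of \<mu>1 r, symmetric]
    by (subst integrable_density) (auto intro: less_imp_le[OF lr_pos])
  then show ?thesis by (simp add: payoff_def opt_payoff_nonneg)
qed

lemma feasible_opt_payoff: "robust_feasible FFSD (law r) (law ` {\<mu>1..}) M0 opt_payoff"
  unfolding robust_feasible_def
proof (intro conjI payoff_opt_payoff ballI)
  fix P assume "P \<in> law ` {\<mu>1..}"
  then obtain \<mu> where "\<mu>1 \<le> \<mu>" "P = law \<mu>" by auto
  then show "pref FFSD M0 (distr P borel opt_payoff)"
    using pref_FFSD_distr_law[OF \<open>\<mu>1 \<le> \<mu>\<close> mono_on_opt_payoff] by (simp add: distr_opt_payoff)
qed

text \<open>Test the constraint at \<open>\<mu>\<^sub>1\<close> against the nondecreasing indicator of \<open>(t, \<infinity>)\<close>.\<close>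
lemma tail_law_\<mu>1_le:
  assumes "robust_feasible FFSD (law r) (law ` {\<mu>1..}) M0 h"
  shows "measure (law \<mu>1) {x. t < opt_payoff x} \<le> measure (law \<mu>1) {x. t < h x}"
proof -
  have [measurable]: "h \<in> borel_measurable borel"
    using assms by (simp add: robust_feasible_def payoff_def)
  have "pref FFSD (distr (law \<mu>1) borel opt_payoff) (distr (law \<mu>1) borel h)"
    using assms by (auto simp: robust_feasible_def distr_opt_payoff)
  moreover have "indicator {t<..} \<in> FFSD" by (auto simp: FFSD_def mono_def indicator_def)
  moreover have "integrable (distr (law \<mu>1) borel g) (indicator {t<..} :: real \<Rightarrow> real)"
    if [measurable]: "g \<in> borel_measurable borel" for g
  proof -
    interpret prob_space "distr (law \<mu>1) borel g"
      by (rule prob_space.prob_space_distr[OF prob_space_law]) simp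
    show ?thesis by (intro integrable_real_indicator) (simp_all add: less_top[symmetric])
  qed
  ultimately have "integral\<^sup>L (distr (law \<mu>1) borel opt_payoff) (indicator {t<..} :: real \<Rightarrow> real)
      \<le> integral\<^sup>L (distr (law \<mu>1) borel h) (indicator {t<..})"
    unfolding pref_def by auto
  then show ?thesis by (simp add: measure_distr vimage_def)
qed

lemma tail_law_r_le:
  assumes "robust_feasible FFSD (law r) (law ` {\<mu>1..}) M0 h"
  shows "measure (law r) {x. t < opt_payoff x} \<le> measure (law r) {x. t < h x}"
proof -
  have [measurable]: "h \<in> borel_measurable borel"
    using assms by (simp add: robust_feasible_def payoff_def)
  have "(\<integral>x. lr \<mu>1 r x * indicator {x. t < opt_payoff x} x \<partial>law \<mu>1)
      \<le> (\<integral>x. lr \<mu>1 r x * indicator {x. t < h x} x \<partial>law \<mu>1)"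
    by (rule neyman_pearson_le[OF prob_space_law sets_law AE_law_pos borel_measurable_lr _ _
          integrable_lr _ lr_strict_anti _ tail_law_\<mu>1_le[OF assms]])
      (auto intro: less_imp_le[OF lr_pos] order_less_le_trans mono_onD[OF mono_on_opt_payoff])
  then show ?thesis by (simp add: measure_law_r)
qed

lemma tail_law_r_eq_imp_AE_eq:
  assumes "robust_feasible FFSD (law r) (law ` {\<mu>1..}) M0 h"
    and "measure (law r) {x. t < h x} = measure (law r) {x. t < opt_payoff x}"
  shows "AE x in law \<mu>1. t < h x \<longleftrightarrow> t < opt_payoff x"
proof -
  have [measurable]: "h \<in> borel_measurable borel"
    using assms by (simp add: robust_feasible_def payoff_def)
  have eq: "(\<integral>x. lr \<mu>1 r x * indicator {x. t < opt_payoff x} x \<partial>law \<mu>1)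
      = (\<integral>x. lr \<mu>1 r x * indicator {x. t < h x} x \<partial>law \<mu>1)"
    using assms(2) by (simp add: measure_law_r)
  have "AE x in law \<mu>1. x \<in> {x. t < h x} \<longleftrightarrow> x \<in> {x. t < opt_payoff x}"
    by (rule neyman_pearson_eq[OF prob_space_law sets_law AE_law_pos borel_measurable_lr _ _
          integrable_lr _ lr_strict_anti _ tail_law_\<mu>1_le[OF assms(1)] eq])
      (auto intro: less_imp_le[OF lr_pos] order_less_le_trans mono_onD[OF mono_on_opt_payoff]
        measure_law_singleton)
  then show ?thesis by simp
qed

lemma borel_measurable_tail:
  fixes h :: "real \<Rightarrow> real"
  assumes [measurable]: "h \<in> borel_measurable borel"
  shows "(\<lambda>t. indicator {0..} t * emeasure (law r) {x. t < h x}) \<in> borel_measurable borel"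
proof -
  interpret prob_space "law r" by (rule prob_space_law)
  have "mono (\<lambda>t::real. - measure (law r) {x. t < h x})"
    by (rule monoI) (auto intro!: finite_measure_mono)
  then have "(\<lambda>t. - measure (law r) {x. t < h x}) \<in> borel_measurable borel"
    by (rule borel_measurable_mono)
  then show ?thesis by (simp add: emeasure_eq_measure)
qed

lemma price_eq_tail_integral:
  assumes "payoff (law r) h"
  shows "ennreal (integral\<^sup>L (law r) h)
    = (\<integral>\<^sup>+t. indicator {0..} t * emeasure (law r) {x. t < h x} \<partial>lborel)"
proof -
  have [measurable]: "h \<in> borel_measurable borel" using assms by (simp add: payoff_def)
  have nonneg: "AE x in law r. 0 \<le> h x"
    by (rule eventually_mono[OF AE_law_pos]) (use assms in \<open>simp add: payoff_def\<close>)
  have "ennreal (integral\<^sup>L (law r) h) = (\<integral>\<^sup>+x. ennreal (h x) \<partial>law r)"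
    using assms nonneg by (intro nn_integral_eq_integral[symmetric]) (auto simp: payoff_def)
  also have "\<dots> = (\<integral>\<^sup>+t. indicator {0..} t * emeasure (law r) {x. t < h x} \<partial>lborel)"
    using nn_integral_layer_cake[OF prob_space_imp_sigma_finite[OF prob_space_law] _ nonneg] by simp
  finally show ?thesis .
qed

lemma tail_le:
  assumes "robust_feasible FFSD (law r) (law ` {\<mu>1..}) M0 h"
  shows "indicator {0..} t * emeasure (law r) {x. t < opt_payoff x}
    \<le> indicator {0..} t * emeasure (law r) {x. t < h x}"
  using tail_law_r_le[OF assms, of t] by (auto intro!: mult_left_mono simp: emeasure_law)

lemma price_opt_payoff_le:
  assumes "robust_feasible FFSD (law r) (law ` {\<mu>1..}) M0 h"
  shows "integral\<^sup>L (law r) opt_payoff \<le> integral\<^sup>L (law r) h"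
proof -
  have h: "payoff (law r) h" using assms by (simp add: robust_feasible_def)
  have "ennreal (integral\<^sup>L (law r) opt_payoff) \<le> ennreal (integral\<^sup>L (law r) h)"
    unfolding price_eq_tail_integral[OF payoff_opt_payoff] price_eq_tail_integral[OF h]
    by (intro nn_integral_mono tail_le[OF assms])
  moreover have "0 \<le> integral\<^sup>L (law r) h"
    by (intro integral_nonneg_AE eventually_mono[OF AE_law_pos]) (use h in \<open>simp add: payoff_def\<close>)
  ultimately show ?thesis by simp
qed

lemma robust_solution_opt_payoff: "robust_solution FFSD r T (law r) (law ` {\<mu>1..}) M0 opt_payoff"
  unfolding robust_solution_def price_def
  using feasible_opt_payoff price_opt_payoff_le by (auto intro: mult_left_mono)

text \<open>Equal prices force equal \<open>Q\<close>-tails for almost every level \<open>t\<close>; by the equality case of the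
  Neyman-Pearson lemma the superlevel sets then agree \<open>P(\<mu>\<^sub>1)\<close>-almost surely.\<close>
lemma robust_solution_unique:
  assumes "robust_solution FFSD r T (law r) (law ` {\<mu>1..}) M0 g"
  shows "AE x in law \<mu>1. g x = opt_payoff x"
proof -
  have g: "robust_feasible FFSD (law r) (law ` {\<mu>1..}) M0 g"
    using assms by (simp add: robust_solution_def)
  then have g_payoff: "payoff (law r) g" by (simp add: robust_feasible_def)
  then have g_measurable [measurable]: "g \<in> borel_measurable borel" by (simp add: payoff_def)
  have "integral\<^sup>L (law r) g \<le> integral\<^sup>L (law r) opt_payoff"
    using assms feasible_opt_payoff by (simp add: robust_solution_def price_def)
  then have "integral\<^sup>L (law r) g = integral\<^sup>L (law r) opt_payoff"
    using price_opt_payoff_le[OF g] by simp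
  then have "AE t in lborel. indicator {0..} t * emeasure (law r) {x. t < g x}
      = indicator {0..} t * emeasure (law r) {x. t < opt_payoff x}"
    by (intro AE_eq_if_nn_integral_eq tail_le[OF g])
      (simp_all add: borel_measurable_tail[OF g_measurable] borel_measurable_tail[OF borel_measurable_opt_payoff]
        price_eq_tail_integral[OF g_payoff, symmetric]
        price_eq_tail_integral[OF payoff_opt_payoff, symmetric])
  then have "AE t in lborel. 0 \<le> t \<longrightarrow> (AE x in law \<mu>1. t < g x \<longleftrightarrow> t < opt_payoff x)"
    by (rule eventually_mono) (auto intro: tail_law_r_eq_imp_AE_eq[OF g] simp: emeasure_law)
  moreover have "AE x in law \<mu>1. 0 \<le> g x \<and> 0 \<le> opt_payoff x"
    by (rule eventually_mono[OF AE_law_pos]) (use g_payoff in \<open>simp add: payoff_def opt_payoff_nonneg\<close>)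
  ultimately show ?thesis
    by (intro AE_eq_if_AE_superlevel_sets_eq prob_space_imp_sigma_finite[OF prob_space_law]) auto
qed

end

theorem mainTheorem5:
  fixes T r S0 s \<mu>1 :: real
  assumes "T > 0" and "S0 > 0" and "s > 0" and "\<mu>1 > r"
  defines "Q \<equiv> ST_law S0 s T r"
    and "\<P> \<equiv> ST_law S0 s T ` {\<mu>1..}"
    and "P1 \<equiv> ST_law S0 s T \<mu>1"
  shows "least_favorable FFSD Q \<P> P1
    \<and> (\<exists>h. strict_mono_on {0<..} h \<and> (AE x in Q. lik Q P1 x = h x))
    \<and> (\<forall>y. measure P1 {x. lik Q P1 x = y} = 0)
    \<and> integrable P1 (\<lambda>x. (1 / lik Q P1 x)\<^sup>2)
    \<and> (\<forall>M0. real_distribution M0 \<longrightarrow> (\<forall>x<0. cdf M0 x = 0)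
          \<longrightarrow> set_integrable lborel {0<..<1} (\<lambda>u. (quantile (cdf M0) u)\<^sup>2)
          \<longrightarrow> robust_solution FFSD r T Q \<P> M0 (\<lambda>x. quantile (cdf M0) (cdf P1 x))
            \<and> (\<forall>g. robust_solution FFSD r T Q \<P> M0 g
                   \<longrightarrow> (AE x in P1. g x = quantile (cdf M0) (cdf P1 x))))"
proof -
  have market: "lognormal_market S0 s T r \<mu>1"
    using assms by unfold_locales auto
  interpret lognormal_market S0 s T r \<mu>1 by (rule market)
  have cost_efficiency:
    "robust_solution FFSD r T (law r) (law ` {\<mu>1..}) M0 (\<lambda>x. quantile (cdf M0) (cdf (law \<mu>1) x))
      \<and> (\<forall>g. robust_solution FFSD r T (law r) (law ` {\<mu>1..}) M0 g
             \<longrightarrow> (AE x in law \<mu>1. g x = quantile (cdf M0) (cdf (law \<mu>1) x)))"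
    if "real_distribution M0" "\<forall>x<0. cdf M0 x = 0"
      "set_integrable lborel {0<..<1} (\<lambda>u. (quantile (cdf M0) u)\<^sup>2)" for M0
  proof -
    interpret robust_cost_efficiency S0 s T r \<mu>1 M0
      by (rule robust_cost_efficiency.intro[OF market robust_cost_efficiency_axioms.intro[OF that]])
    show ?thesis
      using robust_solution_opt_payoff robust_solution_unique by (simp add: opt_payoff_def[abs_def])
  qed
  show ?thesis
    unfolding Q_def \<P>_def P1_def
    using least_favorable lik_strict_mono lik_atomless integrable_inverse_lik_square cost_efficiency
    by (intro conjI allI impI) simp_all
qed

end
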